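(* Assume Non-Degeneracy Assumption I. Let $(B_1,\dots,B_N;\mathcal{K}_0,\mathcal{J}_0,\mathcal{K}_{N+1},\mathcal{J}_{N+1})$ be a base sequence, and let the boundary values $\mathbf{u}^0,\mathbf{u}^N,x^0,\mathbf{x}^N,\mathbf{p}^0,\mathbf{p}^N,q^N,\mathbf{q}^0$ and interval lengths $\tau_1,\dots,\tau_N$ form a solution of the base-sequence system (a)–(e). Suppose that all boundary values $\mathbf{u}^0,\mathbf{u}^N,x^0,\mathbf{x}^N,\mathbf{p}^0,\mathbf{p}^N,q^N,\mathbf{q}^0$ are $\ge 0$, all $\tau_n\ge 0$, and all breakpoint state values $x^n$ and $q^n$, $n=0,1,\dots,N$, are $\ge 0$. Then the constructed functions $U$ and $P$ are optimal solutions of M-CLP and M-CLP$^*$ respectively.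
   Context: Let $A$ be a real $K\times J$ matrix, $\beta,b\in\mathbb{R}^K$, $\gamma,c\in\mathbb{R}^J$, $T>0$. M-CLP is the problem: maximize $\int_{0-}^T(\gamma+(T-t)c)^\top dU(t)$ (Lebesgue–Stieltjes, the jump $U(0)$ at $0$ included) over $U:[0,T]\to\mathbb{R}^J$ that are nonnegative, non-decreasing and right-continuous with $U(0-)=0$, subject to $AU(t)\le\beta+bt$ for all $0\le t\le T$. Its symmetric dual M-CLP$^*$ is: minimize $\int_{0-}^T(\beta+(T-t)b)^\top dP(t)$ over $P:[0,T]\to\mathbb{R}^K$ nonnegative, non-decreasing, right-continuous with $P(0-)=0$, subject to $A^\top P(t)\ge\gamma+ct$ for all $0\le t\le T$. The primal and dual states (slacks) are $x(t)=\beta+bt-AU(t)$ and $q(t)=A^\top P(t)-\gamma-ct$; the dual is viewed as running in reversed time ($P(T-t)$ corresponds to $U(t)$). Non-Degeneracy Assumption I: $b$ is not a linear combination of fewer than $K$ columns of the matrix $[A\ I]$, and $c$ is not a linear combination of fewer than $J$ columns of $[A^\top\ I]$. Bases (of the Rates-LP). Consider the systems $Au+\dot x=b$ (unknowns $u\in\mathbb{R}^J,\dot x\in\mathbb{R}^K$) and $A^\top p-\dot q=c$ (unknowns $p\in\mathbb{R}^K,\dot q\in\mathbb{R}^J$). A basis $B$ is given by index sets $\mathcal{K}\subseteq\{1,\dots,K\}$, $\mathcal{J}\subseteq\{1,\dots,J\}$ such that the primal basic variables $\dot x_k$ ($k\in\mathcal{K}$) and $u_j$ ($j\notin\mathcal{J}$)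 are $K$ in number with linearly independent columns in $[A\ I]$. Its primal basic solution is the unique solution of $Au+\dot x=b$ with $u_j=0$ ($j\in\mathcal{J}$), $\dot x_k=0$ ($k\notin\mathcal{K}$); its complementary dual basic solution is the unique solution of $A^\top p-\dot q=c$ with $p_k=0$ ($k\in\mathcal{K}$), $\dot q_j=0$ ($j\notin\mathcal{J}$) (dual basic variables $p_k$, $k\notin\mathcal{K}$, and $\dot q_j$, $j\in\mathcal{J}$). $B$ is admissible if $u\ge0$ and $p\ge0$. Bases $B_n,B_{n+1}$ are adjacent if one is obtained from the other by a single pivot: one primal basic variable $v_n$ leaves and one variable $w_n$ enters. Base sequence: an integer $N\ge1$, admissible bases $B_1,\dots,B_N$ with index sets $(\mathcal{K}_n,\mathcal{J}_n)$, $B_n$ and $B_{n+1}$ adjacent for $n=1,\dots,N-1$, with primal/dual basic solutions (rates) $u^n,\dot x^n,p^n,\dot q^n$; together with index sets $\mathcal{K}_0,\mathcal{K}_{N+1}\subseteq\{1,\dots,K\}$, $\mathcal{J}_0,\mathcal{J}_{N+1}\subseteq\{1,\dots,J\}$ satisfying the compatibility conditions $\mathcal{K}_0\subseteq\mathcal{K}_1$ and $\mathcal{J}_{N+1}\subseteq\mathcal{J}_N$. Base-sequence system. Unknowns: $\mathbf{u}^0,\mathbf{u}^N,q^N,\mathbf{q}^0\in\mathbb{R}^J$, $x^0,\mathbf{x}^N,\mathbf{p}^0,\mathbf{p}^N\in\mathbb{R}^K$, $\tau_1,\dots,\tau_N\in\mathbb{R}$. Write $x^n=x^0+\sum_{m=1}^n\dot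 x^m\tau_m$ and $q^n=q^N+\sum_{m=n+1}^N\dot q^m\tau_m$ for $n=0,\dots,N$. Equations: (a) for $n=1,\dots,N-1$: if $v_n=\dot x_k$ then $x^n_k=0$; if $v_n=u_j$ then $q^n_j=0$; (b) $\sum_{n=1}^N\tau_n=T$; (c) $\mathbf{u}^0_j=0$ for $j\in\mathcal{J}_0$, $x^0_k=0$ for $k\notin\mathcal{K}_0$, $\mathbf{p}^0_k=0$ for $k\in\mathcal{K}_0$, $\mathbf{q}^0_j=0$ for $j\notin\mathcal{J}_0$, $\mathbf{p}^N_k=0$ for $k\in\mathcal{K}_{N+1}$, $q^N_j=0$ for $j\notin\mathcal{J}_{N+1}$, $\mathbf{u}^N_j=0$ for $j\in\mathcal{J}_{N+1}$, $\mathbf{x}^N_k=0$ for $k\notin\mathcal{K}_{N+1}$; (d) $A\mathbf{u}^0+x^0=\beta$, $A^\top\mathbf{p}^N-q^N=\gamma$; (e) $A\mathbf{u}^N+\mathbf{x}^N-x^N=0$, $A^\top\mathbf{p}^0-\mathbf{q}^0+q^0=0$. Constructed functions: $t_0=0$, $t_n=\tau_1+\dots+\tau_n$; $u(t)=u^n$ for $t\in(t_{n-1},t_n)$; $U(t)=\mathbf{u}^0+\int_0^tu(s)ds$ for $0\le t<T$, $U(T)=\mathbf{u}^0+\int_0^Tu(s)ds+\mathbf{u}^N$; $p(s)=p^n$ for $s\in(T-t_n,T-t_{n-1})$; $P(s)=\mathbf{p}^N+\int_0^sp(r)dr$ for $0\le s<T$, $P(T)=\mathbf{p}^N+\int_0^Tp(r)dr+\mathbf{p}^0$.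 *)

theory Defs
  imports "HOL-Analysis.Analysis"
begin

(* Conventions: the K x J matrix A is  A :: real^'j^'k  (rows indexed by the finite
   type 'k with CARD('k) = K, columns by 'j with CARD('j) = J). *)

(* column of [A I]: Inl j = column j of A (variable u_j), Inr k = unit vector e_k (variable xdot_k) *)
definition colP :: "real^'j^'k \<Rightarrow> 'j + 'k \<Rightarrow> real^'k" where
  "colP A v = (case v of Inl j \<Rightarrow> (\<chi> k. A $ k $ j) | Inr k \<Rightarrow> axis k 1)"

definition colD :: "real^'j^'k \<Rightarrow> 'k + 'j \<Rightarrow> real^'j" where
  "colD A v = (case v of Inl k \<Rightarrow> (\<chi> j. A $ k $ j) | Inr j \<Rightarrow> axis j 1)"

definition nondeg_I :: "real^'j^'k \<Rightarrow> real^'k \<Rightarrow> real^'j \<Rightarrow> bool" where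
  "nondeg_I A b c \<longleftrightarrow>
     (\<forall>S :: ('j + 'k) set. card S < CARD('k) \<longrightarrow> b \<notin> span (colP A ` S)) \<and>
     (\<forall>S :: ('k + 'j) set. card S < CARD('j) \<longrightarrow> c \<notin> span (colD A ` S))"

(* primal basic variables: u_j (j \<notin> \<J>) as Inl j, xdot_k (k \<in> \<K>) as Inr k *)
definition basic_vars :: "'k set \<Rightarrow> 'j set \<Rightarrow> ('j + 'k) set" where
  "basic_vars Ks Js = Inl ` (UNIV - Js) \<union> Inr ` Ks"

definition is_basis :: "real^'j^'k \<Rightarrow> 'k set \<Rightarrow> 'j set \<Rightarrow> bool" where
  "is_basis A Ks Js \<longleftrightarrow>
     card (basic_vars Ks Js) = CARD('k) \<and>
     inj_on (colP A) (basic_vars Ks Js) \<and>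
     independent (colP A ` basic_vars Ks Js)"

definition primal_basic_sol ::
  "real^'j^'k \<Rightarrow> real^'k \<Rightarrow> 'k set \<Rightarrow> 'j set \<Rightarrow> real^'j \<Rightarrow> real^'k \<Rightarrow> bool" where
  "primal_basic_sol A b Ks Js u xd \<longleftrightarrow>
     A *v u + xd = b \<and> (\<forall>j\<in>Js. u $ j = 0) \<and> (\<forall>k. k \<notin> Ks \<longrightarrow> xd $ k = 0)"

definition dual_basic_sol ::
  "real^'j^'k \<Rightarrow> real^'j \<Rightarrow> 'k set \<Rightarrow> 'j set \<Rightarrow> real^'k \<Rightarrow> real^'j \<Rightarrow> bool" where
  "dual_basic_sol A c Ks Js p qd \<longleftrightarrow>
     transpose A *v p - qd = c \<and> (\<forall>k\<in>Ks. p $ k = 0) \<and> (\<forall>j. j \<notin> Js \<longrightarrow> qd $ j = 0)"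

definition adjacent :: "'k set \<Rightarrow> 'j set \<Rightarrow> 'k set \<Rightarrow> 'j set \<Rightarrow> bool" where
  "adjacent K1 J1 K2 J2 \<longleftrightarrow>
     (\<exists>v w. v \<in> basic_vars K1 J1 \<and> w \<notin> basic_vars K1 J1 \<and>
            basic_vars K2 J2 = insert w (basic_vars K1 J1 - {v}))"

(* distribution function of the Lebesgue-Stieltjes measure dF on [0-,T]:
   F(t) = 0 for t < 0 (so U(0-) = 0 and the jump U(0) at 0 is an atom), constant after T *)
definition ls_ext :: "real \<Rightarrow> (real \<Rightarrow> real) \<Rightarrow> real \<Rightarrow> real" where
  "ls_ext T f t = (if t < 0 then 0 else if t \<le> T then f t else f T)"

definition ls_integral :: "real \<Rightarrow> (real \<Rightarrow> real) \<Rightarrow> (real \<Rightarrow> real) \<Rightarrow> real" where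
  "ls_integral T f g = integral\<^sup>L (interval_measure (ls_ext T f)) (\<lambda>t. indicator {0..T} t * g t)"

definition mclp_feasible :: "real^'j^'k \<Rightarrow> real^'k \<Rightarrow> real^'k \<Rightarrow> real \<Rightarrow> (real \<Rightarrow> real^'j) \<Rightarrow> bool" where
  "mclp_feasible A \<beta> b T U \<longleftrightarrow>
     (\<forall>t\<in>{0..T}. 0 \<le> U t) \<and>
     (\<forall>s t. 0 \<le> s \<longrightarrow> s \<le> t \<longrightarrow> t \<le> T \<longrightarrow> U s \<le> U t) \<and>
     (\<forall>t\<in>{0..<T}. continuous (at_right t) U) \<and>
     (\<forall>t\<in>{0..T}. A *v U t \<le> \<beta> + t *\<^sub>R b)"

definition mclp_obj :: "real^'j \<Rightarrow> real^'j \<Rightarrow> real \<Rightarrow> (real \<Rightarrow> real^'j) \<Rightarrow> real" where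
  "mclp_obj \<gamma> c T U = (\<Sum>j\<in>UNIV. ls_integral T (\<lambda>t. U t $ j) (\<lambda>t. \<gamma> $ j + (T - t) * c $ j))"

definition mclp_optimal ::
  "real^'j^'k \<Rightarrow> real^'k \<Rightarrow> real^'k \<Rightarrow> real^'j \<Rightarrow> real^'j \<Rightarrow> real \<Rightarrow> (real \<Rightarrow> real^'j) \<Rightarrow> bool" where
  "mclp_optimal A \<beta> b \<gamma> c T U \<longleftrightarrow>
     mclp_feasible A \<beta> b T U \<and>
     (\<forall>U'. mclp_feasible A \<beta> b T U' \<longrightarrow> mclp_obj \<gamma> c T U' \<le> mclp_obj \<gamma> c T U)"

definition mclp_dual_feasible :: "real^'j^'k \<Rightarrow> real^'j \<Rightarrow> real^'j \<Rightarrow> real \<Rightarrow> (real \<Rightarrow> real^'k) \<Rightarrow> bool" where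
  "mclp_dual_feasible A \<gamma> c T P \<longleftrightarrow>
     (\<forall>t\<in>{0..T}. 0 \<le> P t) \<and>
     (\<forall>s t. 0 \<le> s \<longrightarrow> s \<le> t \<longrightarrow> t \<le> T \<longrightarrow> P s \<le> P t) \<and>
     (\<forall>t\<in>{0..<T}. continuous (at_right t) P) \<and>
     (\<forall>t\<in>{0..T}. \<gamma> + t *\<^sub>R c \<le> transpose A *v P t)"

definition mclp_dual_obj :: "real^'k \<Rightarrow> real^'k \<Rightarrow> real \<Rightarrow> (real \<Rightarrow> real^'k) \<Rightarrow> real" where
  "mclp_dual_obj \<beta> b T P = (\<Sum>k\<in>UNIV. ls_integral T (\<lambda>t. P t $ k) (\<lambda>t. \<beta> $ k + (T - t) * b $ k))"

definition mclp_dual_optimal ::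
  "real^'j^'k \<Rightarrow> real^'k \<Rightarrow> real^'k \<Rightarrow> real^'j \<Rightarrow> real^'j \<Rightarrow> real \<Rightarrow> (real \<Rightarrow> real^'k) \<Rightarrow> bool" where
  "mclp_dual_optimal A \<beta> b \<gamma> c T P \<longleftrightarrow>
     mclp_dual_feasible A \<gamma> c T P \<and>
     (\<forall>P'. mclp_dual_feasible A \<gamma> c T P' \<longrightarrow> mclp_dual_obj \<beta> b T P \<le> mclp_dual_obj \<beta> b T P')"

definition brk :: "(nat \<Rightarrow> real) \<Rightarrow> nat \<Rightarrow> real" where
  "brk \<tau> n = (\<Sum>m\<in>{1..n}. \<tau> m)"

definition state_x :: "real^'k \<Rightarrow> (nat \<Rightarrow> real^'k) \<Rightarrow> (nat \<Rightarrow> real) \<Rightarrow> nat \<Rightarrow> real^'k" where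
  "state_x x0 xd \<tau> n = x0 + (\<Sum>m\<in>{1..n}. \<tau> m *\<^sub>R xd m)"

definition state_q :: "nat \<Rightarrow> real^'j \<Rightarrow> (nat \<Rightarrow> real^'j) \<Rightarrow> (nat \<Rightarrow> real) \<Rightarrow> nat \<Rightarrow> real^'j" where
  "state_q N qN qd \<tau> n = qN + (\<Sum>m\<in>{n+1..N}. \<tau> m *\<^sub>R qd m)"

definition rate_u :: "nat \<Rightarrow> (nat \<Rightarrow> real) \<Rightarrow> (nat \<Rightarrow> real^'j) \<Rightarrow> real \<Rightarrow> real^'j" where
  "rate_u N \<tau> ur t = (\<Sum>n\<in>{1..N}. indicator {brk \<tau> (n-1)<..<brk \<tau> n} t *\<^sub>R ur n)"

definition constr_U ::
  "real \<Rightarrow> nat \<Rightarrow> (nat \<Rightarrow> real) \<Rightarrow> (nat \<Rightarrow> real^'j) \<Rightarrow> real^'j \<Rightarrow> real^'j \<Rightarrow> real \<Rightarrow> real^'j" where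
  "constr_U T N \<tau> ur uB0 uBN t =
     (if t < T then uB0 + integral {0..t} (rate_u N \<tau> ur)
      else uB0 + integral {0..T} (rate_u N \<tau> ur) + uBN)"

definition rate_p :: "real \<Rightarrow> nat \<Rightarrow> (nat \<Rightarrow> real) \<Rightarrow> (nat \<Rightarrow> real^'k) \<Rightarrow> real \<Rightarrow> real^'k" where
  "rate_p T N \<tau> pr s = (\<Sum>n\<in>{1..N}. indicator {T - brk \<tau> n<..<T - brk \<tau> (n-1)} s *\<^sub>R pr n)"

definition constr_P ::
  "real \<Rightarrow> nat \<Rightarrow> (nat \<Rightarrow> real) \<Rightarrow> (nat \<Rightarrow> real^'k) \<Rightarrow> real^'k \<Rightarrow> real^'k \<Rightarrow> real \<Rightarrow> real^'k" where
  "constr_P T N \<tau> pr pB0 pBN s =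
     (if s < T then pBN + integral {0..s} (rate_p T N \<tau> pr)
      else pBN + integral {0..T} (rate_p T N \<tau> pr) + pB0)"

end

theory Submission
  imports Defs "HOL-Probability.Distribution_Functions"
begin

(* Idea.  U and P are piecewise linear with jumps at 0 and T; we show that both are
   feasible and that they satisfy complementary slackness, which by a weak duality
   argument makes them optimal.

   The base-sequence equations (a), (c) force the relevant
      slacks to vanish on each interval, which gives tightness in both directions. *)

section \<open>Lebesgue-Stieltjes measures of admissible controls\<close>

definition ls_distribution :: "real \<Rightarrow> (real \<Rightarrow> real) \<Rightarrow> bool" where
  "ls_distribution T f \<longleftrightarrow> 0 \<le> T \<and> 0 \<le> f 0 \<and>
     (\<forall>s t. 0 \<le> s \<longrightarrow> s \<le> t \<longrightarrow> t \<le> T \<longrightarrow> f s \<le> f t) \<and>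
     (\<forall>t\<in>{0..<T}. continuous (at_right t) f)"

abbreviation ls_measure :: "real \<Rightarrow> (real \<Rightarrow> real) \<Rightarrow> real measure" where
  "ls_measure T f \<equiv> interval_measure (ls_ext T f)"

lemma ls_ext_mono:
  assumes "ls_distribution T f" "x \<le> y" shows "ls_ext T f x \<le> ls_ext T f y"
  using assms unfolding ls_distribution_def ls_ext_def by (auto; smt (verit))

lemma ls_ext_right_continuous:
  assumes f: "ls_distribution T f" shows "continuous (at_right a) (ls_ext T f)"
proof -
  consider "a < 0" | "0 \<le> a" "a < T" | "T \<le> a" by linarith
  then show ?thesis
  proof cases
    case 1
    have "\<forall>\<^sub>F x in at_right a. ls_ext T f x = ls_ext T f a"
      using eventually_at_right_real[OF 1] by eventually_elim (auto simp: ls_ext_def)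
    then show ?thesis unfolding continuous_within by (rule tendsto_eventually)
  next
    case 2
    then have "(f \<longlongrightarrow> ls_ext T f a) (at_right a)"
      using f by (auto simp: ls_distribution_def ls_ext_def continuous_within)
    moreover have "\<forall>\<^sub>F x in at_right a. f x = ls_ext T f x"
      using eventually_at_right_real[OF 2(2)] by eventually_elim (use 2 in \<open>auto simp: ls_ext_def\<close>)
    ultimately show ?thesis unfolding continuous_within by (rule Lim_transform_eventually)
  next
    case 3
    have "\<forall>\<^sub>F x in at_right a. ls_ext T f x = ls_ext T f a"
      using eventually_at_right_less[of a]
      by eventually_elim (use 3 f in \<open>auto simp: ls_ext_def ls_distribution_def\<close>)
    then show ?thesis unfolding continuous_within by (rule tendsto_eventually)
  qed
qed

lemma ls_measure_finite_borel:
  assumes f: "ls_distribution T f"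
  shows "finite_borel_measure (ls_measure T f)" and "cdf (ls_measure T f) = ls_ext T f"
proof -
  have mono: "\<And>x y. x \<le> y \<Longrightarrow> ls_ext T f x \<le> ls_ext T f y" by (rule ls_ext_mono[OF f])
  have bot: "(ls_ext T f \<longlongrightarrow> 0) at_bot"
    by (rule tendsto_eventually, unfold eventually_at_bot_linorder, rule exI[of _ "-1"])
       (auto simp: ls_ext_def)
  have top: "(ls_ext T f \<longlongrightarrow> f T) at_top"
    using f by (intro tendsto_eventually, unfold eventually_at_top_linorder, intro exI[of _ T])
       (auto simp: ls_ext_def ls_distribution_def)
  have "0 \<le> f T" using f unfolding ls_distribution_def by force
  with mono ls_ext_right_continuous[OF f] bot top show "finite_borel_measure (ls_measure T f)"
    by (rule finite_borel_measure_interval_measure)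
  show "cdf (ls_measure T f) = ls_ext T f"
    by (rule cdf_interval_measure[OF mono ls_ext_right_continuous[OF f] bot])
qed

(* The mass of [0,x] is F(x): nothing lives on the negative half-line. *)
lemma measure_ls_Icc:
  assumes f: "ls_distribution T f" and x: "0 \<le> x"
  shows "measure (ls_measure T f) {0..x} = ls_ext T f x"
proof -
  interpret finite_borel_measure "ls_measure T f" by (rule ls_measure_finite_borel(1)[OF f])
  have cdf: "cdf (ls_measure T f) = ls_ext T f" by (rule ls_measure_finite_borel(2)[OF f])
  have "\<forall>\<^sub>F y in at_left 0. ls_ext T f y = 0"
    by (rule eventually_at_leftI[of "-1"]) (auto simp: ls_ext_def)
  then have "(cdf (ls_measure T f) \<longlongrightarrow> 0) (at_left 0)"
    unfolding cdf by (rule tendsto_eventually)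
  then have before_0: "measure (ls_measure T f) {..<0} = 0"
    using tendsto_unique[OF trivial_limit_at_left_real cdf_at_left[of 0]] by simp
  have "{..x} = {..<0} \<union> {0..x}" using x by auto
  moreover have "measure (ls_measure T f) ({..<0} \<union> {0..x}) =
      measure (ls_measure T f) {..<0} + measure (ls_measure T f) {0..x}"
    by (rule finite_measure_Union) auto
  ultimately have "measure (ls_measure T f) {..x} = measure (ls_measure T f) {0..x}"
    using before_0 by simp
  then show ?thesis using cdf_def2[of "ls_measure T f" x] cdf by simp
qed

lemma measure_ls_singleton:
  assumes f: "ls_distribution T f" and c: "0 < c" "c \<le> T" and cont: "continuous_on {0..c} f"
  shows "measure (ls_measure T f) {c} = 0"
proof -
  interpret finite_borel_measure "ls_measure T f" by (rule ls_measure_finite_borel(1)[OF f])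
  have "(f \<longlongrightarrow> f c) (at_left c)" by (rule continuous_on_Icc_at_leftD[OF cont c(1)])
  moreover have "\<forall>\<^sub>F y in at_left c. f y = ls_ext T f y"
    using eventually_at_left_real[OF c(1)] by eventually_elim (use c in \<open>auto simp: ls_ext_def\<close>)
  ultimately have "(ls_ext T f \<longlongrightarrow> ls_ext T f c) (at_left c)"
    using c by (auto simp: ls_ext_def intro: Lim_transform_eventually)
  then have "isCont (ls_ext T f) c"
    using ls_ext_right_continuous[OF f] by (simp add: continuous_at_split continuous_within[symmetric])
  then show ?thesis using isCont_cdf ls_measure_finite_borel(2)[OF f] by simp
qed

lemma measure_ls_flat:
  assumes f: "ls_distribution T f" and flat: "\<And>x. a \<le> x \<Longrightarrow> x < c \<Longrightarrow> ls_ext T f x = ls_ext T f a"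
  shows "measure (ls_measure T f) {a<..<c} = 0"
proof (cases "a < c")
  case True
  interpret finite_borel_measure "ls_measure T f" by (rule ls_measure_finite_borel(1)[OF f])
  have cdf: "cdf (ls_measure T f) = ls_ext T f" by (rule ls_measure_finite_borel(2)[OF f])
  have "\<forall>\<^sub>F y in at_left c. ls_ext T f y = ls_ext T f a"
    using eventually_at_left_real[OF True] by eventually_elim (auto intro: flat)
  then have "(cdf (ls_measure T f) \<longlongrightarrow> ls_ext T f a) (at_left c)"
    unfolding cdf by (rule tendsto_eventually)
  then have "measure (ls_measure T f) {..<c} = ls_ext T f a"
    using tendsto_unique[OF trivial_limit_at_left_real cdf_at_left[of c]] by simp
  also have "\<dots> = measure (ls_measure T f) {..a}" using cdf by (simp add: cdf_def2[symmetric])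
  finally have "measure (ls_measure T f) {..<c} = measure (ls_measure T f) {..a}" .
  moreover have "{..<c} = {..a} \<union> {a<..<c}" using True by auto
  moreover have "measure (ls_measure T f) ({..a} \<union> {a<..<c}) =
      measure (ls_measure T f) {..a} + measure (ls_measure T f) {a<..<c}"
    by (rule finite_measure_Union) auto
  ultimately show ?thesis by simp
qed simp

lemma ls_ext_borel_measurable:
  assumes "ls_distribution T f" shows "ls_ext T f \<in> borel_measurable borel"
  by (rule borel_measurable_mono) (auto simp: mono_def ls_ext_mono[OF assms])

lemma integrable_ls_measure:
  fixes h :: "real \<Rightarrow> real"
  assumes f: "ls_distribution T f" and h: "h \<in> borel_measurable borel" and bound: "\<And>t. \<bar>h t\<bar> \<le> B"
  shows "integrable (ls_measure T f) h"
proof -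
  interpret finite_borel_measure "ls_measure T f" by (rule ls_measure_finite_borel(1)[OF f])
  show ?thesis
  proof (rule integrable_const_bound[where B=B])
    show "h \<in> borel_measurable (ls_measure T f)"
      using h measurable_cong_sets[OF sets_interval_measure refl] by blast
  qed (use bound in auto)
qed

lemma reversed_integrand:
  assumes g: "ls_distribution T g"
  shows "(\<lambda>t. indicator {0..T} t * g (T - t)) \<in> borel_measurable borel"
    and "\<bar>indicator {0..T} t * g (T - t)\<bar> \<le> g T"
    and "0 \<le> indicator {0..T} t * g (T - t)"
proof -
  have eq: "(\<lambda>t. indicator {0..T} t * g (T - t)) = (\<lambda>t. indicator {0..T} t * ls_ext T g (T - t))"
    by (auto simp: indicator_def ls_ext_def fun_eq_iff)
  have "(\<lambda>t. ls_ext T g (T - t)) \<in> borel_measurable borel"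
    by (rule measurable_compose[OF _ ls_ext_borel_measurable[OF g]]) simp
  then show "(\<lambda>t. indicator {0..T} t * g (T - t)) \<in> borel_measurable borel"
    unfolding eq by measurable
  have "0 \<le> ls_ext T g (T - t)" "ls_ext T g (T - t) \<le> ls_ext T g T"
    using ls_ext_mono[OF g, of "min (T - t) (-1)" "T - t"] ls_ext_mono[OF g, of "T - t" T] g
    by (auto simp: ls_ext_def ls_distribution_def min_def split: if_splits)
  then show "\<bar>indicator {0..T} t * g (T - t)\<bar> \<le> g T" "0 \<le> indicator {0..T} t * g (T - t)"
    using g by (auto simp: indicator_def ls_ext_def ls_distribution_def)
qed

lemma nn_integral_triangle_section:
  assumes g: "ls_distribution T g"
  shows "(\<integral>\<^sup>+ s. indicator {s. 0 \<le> t \<and> 0 \<le> s \<and> t + s \<le> T} s \<partial>ls_measure T g)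
         = ennreal (indicator {0..T} t * g (T - t))"
proof (cases "t \<in> {0..T}")
  case True
  interpret finite_borel_measure "ls_measure T g" by (rule ls_measure_finite_borel(1)[OF g])
  have "{s. 0 \<le> t \<and> 0 \<le> s \<and> t + s \<le> T} = {0..T - t}" using True by auto
  then show ?thesis
    using True measure_ls_Icc[OF g, of "T - t"] by (simp add: emeasure_eq_measure ls_ext_def)
next
  case False
  then have "{s. 0 \<le> t \<and> 0 \<le> s \<and> t + s \<le> T} = {}" by auto
  then show ?thesis using False by simp
qed

(* The symmetry behind duality: int_[0,T] G(T - t) dF(t) = int_[0,T] F(T - s) dG(s),
   since both sides are the dF x dG mass of the triangle {t, s >= 0, t + s <= T} (Fubini). *)
lemma ls_integral_swap:
  assumes f: "ls_distribution T f" and g: "ls_distribution T g"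
  shows "integral\<^sup>L (ls_measure T f) (\<lambda>t. indicator {0..T} t * g (T - t)) =
         integral\<^sup>L (ls_measure T g) (\<lambda>s. indicator {0..T} s * f (T - s))"
proof -
  let ?M = "ls_measure T f" and ?N = "ls_measure T g"
  let ?D = "{p :: real \<times> real. 0 \<le> fst p \<and> 0 \<le> snd p \<and> fst p + snd p \<le> T}"
  interpret M: finite_borel_measure ?M by (rule ls_measure_finite_borel(1)[OF f])
  interpret N: finite_borel_measure ?N by (rule ls_measure_finite_borel(1)[OF g])
  interpret pair_sigma_finite ?M ?N ..
  have meas_M: "(\<lambda>t. indicator {0..T} t * g (T - t)) \<in> borel_measurable ?M"
    using reversed_integrand(1)[OF g] measurable_cong_sets[OF sets_interval_measure refl] by blast
  have meas_N: "(\<lambda>s. indicator {0..T} s * f (T - s)) \<in> borel_measurable ?N"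
    using reversed_integrand(1)[OF f] measurable_cong_sets[OF sets_interval_measure refl] by blast
  have "sets (?M \<Otimes>\<^sub>M ?N) = sets (borel \<Otimes>\<^sub>M borel)" by (rule sets_pair_measure_cong) simp_all
  also have "\<dots> = sets borel" by (simp only: borel_prod)
  finally have "?D \<in> sets (?M \<Otimes>\<^sub>M ?N)"
    by (simp add: closed_Collect_conj closed_Collect_le continuous_intros)
  then have meas_D: "(\<lambda>(t, s). indicator {s. 0 \<le> t \<and> 0 \<le> s \<and> t + s \<le> T} s :: ennreal)
      \<in> borel_measurable (?M \<Otimes>\<^sub>M ?N)"
    by (rule borel_measurable_indicator[THEN measurable_cong[THEN iffD1, rotated]])
       (auto simp: indicator_def)
  have "integral\<^sup>L ?M (\<lambda>t. indicator {0..T} t * g (T - t)) =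
        enn2real (\<integral>\<^sup>+ t. ennreal (indicator {0..T} t * g (T - t)) \<partial>?M)"
    by (rule integral_eq_nn_integral[OF meas_M]) (simp add: reversed_integrand(3)[OF g])
  also have "(\<integral>\<^sup>+ t. ennreal (indicator {0..T} t * g (T - t)) \<partial>?M) =
      (\<integral>\<^sup>+ t. (\<integral>\<^sup>+ s. indicator {s. 0 \<le> t \<and> 0 \<le> s \<and> t + s \<le> T} s \<partial>?N) \<partial>?M)"
    by (simp add: nn_integral_triangle_section[OF g])
  also have "\<dots> = (\<integral>\<^sup>+ s. (\<integral>\<^sup>+ t. indicator {s. 0 \<le> t \<and> 0 \<le> s \<and> t + s \<le> T} s \<partial>?M) \<partial>?N)"
    using Fubini'[OF meas_D] by simp
  also have "\<dots> = (\<integral>\<^sup>+ s. (\<integral>\<^sup>+ t. indicator {t. 0 \<le> s \<and> 0 \<le> t \<and> s + t \<le> T} t \<partial>?M) \<partial>?N)"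
    by (intro nn_integral_cong) (auto simp: indicator_def)
  also have "\<dots> = (\<integral>\<^sup>+ s. ennreal (indicator {0..T} s * f (T - s)) \<partial>?N)"
    by (simp add: nn_integral_triangle_section[OF f])
  also have "enn2real \<dots> = integral\<^sup>L ?N (\<lambda>s. indicator {0..T} s * f (T - s))"
    by (rule integral_eq_nn_integral[OF meas_N, symmetric]) (simp add: reversed_integrand(3)[OF f])
  finally show ?thesis .
qed

section \<open>Weak duality and the complementary slackness criterion\<close>

lemma neg_matrix_vector_mult: "(- M) *v x = - (M *v x)" for M :: "real^'a^'b"
  using matrix_vector_mult_diff_rdistrib[of 0 M x] by simp

lemma transpose_neg: "transpose (- M) = - transpose M" for M :: "real^'a^'b"
  by (simp add: vec_eq_iff transpose_def)

lemma mclp_dual_feasible_iff: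
  "mclp_dual_feasible A \<gamma> c T P \<longleftrightarrow> mclp_feasible (- transpose A) (- \<gamma>) (- c) T P"
proof -
  have "\<gamma> + t *\<^sub>R c \<le> transpose A *v P t \<longleftrightarrow> (- transpose A) *v P t \<le> - \<gamma> + t *\<^sub>R - c" for t
    unfolding neg_matrix_vector_mult less_eq_vec_def by (auto simp: algebra_simps)
  then show ?thesis unfolding mclp_dual_feasible_def mclp_feasible_def by simp
qed

lemma mclp_feasible_iff_dual:
  "mclp_feasible A \<beta> b T U \<longleftrightarrow> mclp_dual_feasible (- transpose A) (- \<beta>) (- b) T U"
  unfolding mclp_dual_feasible_iff transpose_neg transpose_transpose by simp

lemma feasible_component_distribution:
  assumes "mclp_feasible A \<beta> b T U" "0 \<le> T" shows "ls_distribution T (\<lambda>t. U t $ j)"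
  using assms unfolding mclp_feasible_def ls_distribution_def
  by (auto simp: less_eq_vec_def intro: continuous_component)

lemma dual_feasible_component_distribution:
  assumes "mclp_dual_feasible A \<gamma> c T P" "0 \<le> T" shows "ls_distribution T (\<lambda>t. P t $ k)"
  using assms unfolding mclp_dual_feasible_iff by (rule feasible_component_distribution)

(* The bilinear coupling sum_{j,k} A_kj int_[0,T] P_k(T - t) dU_j(t) between a primal
   and a (time-reversed) dual solution; both objectives are compared with it. *)
definition coupling :: "real^'j^'k \<Rightarrow> real \<Rightarrow> (real \<Rightarrow> real^'j) \<Rightarrow> (real \<Rightarrow> real^'k) \<Rightarrow> real" where
  "coupling A T U P = (\<Sum>j\<in>UNIV. \<Sum>k\<in>UNIV. A $ k $ j *
      integral\<^sup>L (ls_measure T (\<lambda>t. U t $ j)) (\<lambda>t. indicator {0..T} t * P (T - t) $ k))"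

lemma coupling_column:
  assumes U: "ls_distribution T (\<lambda>t. U t $ j)" and P: "\<And>k. ls_distribution T (\<lambda>t. P t $ k)"
  defines "\<mu> \<equiv> ls_measure T (\<lambda>t. U t $ j)"
  shows "(\<Sum>k\<in>UNIV. A $ k $ j * integral\<^sup>L \<mu> (\<lambda>t. indicator {0..T} t * P (T - t) $ k))
       = integral\<^sup>L \<mu> (\<lambda>t. indicator {0..T} t * (transpose A *v P (T - t)) $ j)"
    and "integrable \<mu> (\<lambda>t. indicator {0..T} t * (transpose A *v P (T - t)) $ j)"
proof -
  have integrable_k: "integrable \<mu> (\<lambda>t. indicator {0..T} t * P (T - t) $ k)" for k
    unfolding \<mu>_def using reversed_integrand[OF P[of k]] by (intro integrable_ls_measure[OF U]) auto
  have column: "indicator {0..T} t * (transpose A *v P (T - t)) $ j =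
      (\<Sum>k\<in>UNIV. A $ k $ j * (indicator {0..T} t * P (T - t) $ k))" for t
    by (simp add: matrix_vector_mult_def transpose_def sum_distrib_left algebra_simps)
  show "(\<Sum>k\<in>UNIV. A $ k $ j * integral\<^sup>L \<mu> (\<lambda>t. indicator {0..T} t * P (T - t) $ k))
       = integral\<^sup>L \<mu> (\<lambda>t. indicator {0..T} t * (transpose A *v P (T - t)) $ j)"
    unfolding column using integrable_k by (subst Bochner_Integration.integral_sum) auto
  show "integrable \<mu> (\<lambda>t. indicator {0..T} t * (transpose A *v P (T - t)) $ j)"
    unfolding column using integrable_k by auto
qed

lemma integrable_objective_weight:
  assumes "ls_distribution T f"
  shows "integrable (ls_measure T f) (\<lambda>t. indicator {0..T} t * (a + (T - t) * b))"
proof (rule integrable_ls_measure[OF assms, where B = "\<bar>a\<bar> + T * \<bar>b\<bar>"])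
  show "(\<lambda>t. indicator {0..T} t * (a + (T - t) * b)) \<in> borel_measurable borel" by measurable
  fix t
  show "\<bar>indicator {0..T} t * (a + (T - t) * b)\<bar> \<le> \<bar>a\<bar> + T * \<bar>b\<bar>"
  proof (cases "t \<in> {0..T}")
    case True
    then have "\<bar>(T - t) * b\<bar> \<le> T * \<bar>b\<bar>" by (auto simp: abs_mult intro!: mult_right_mono)
    then show ?thesis using True by auto
  qed (use assms in \<open>auto simp: ls_distribution_def\<close>)
qed

lemma mclp_obj_le_coupling:
  assumes U: "mclp_feasible A \<beta> b T U" and P: "mclp_dual_feasible A \<gamma> c T P" and T: "0 \<le> T"
  shows "mclp_obj \<gamma> c T U \<le> coupling A T U P"
  unfolding mclp_obj_def coupling_def ls_integral_def
proof (rule sum_mono)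
  fix j
  note Uj = feasible_component_distribution[OF U T, of j]
  note Pk = dual_feasible_component_distribution[OF P T]
  have "indicator {0..T} t * (\<gamma> $ j + (T - t) * c $ j) \<le>
        indicator {0..T} t * (transpose A *v P (T - t)) $ j" for t
    using P unfolding mclp_dual_feasible_def by (auto simp: less_eq_vec_def indicator_def)
  then show "integral\<^sup>L (ls_measure T (\<lambda>t. U t $ j)) (\<lambda>t. indicator {0..T} t * (\<gamma> $ j + (T - t) * c $ j))
      \<le> (\<Sum>k\<in>UNIV. A $ k $ j * integral\<^sup>L (ls_measure T (\<lambda>t. U t $ j)) (\<lambda>t. indicator {0..T} t * P (T - t) $ k))"
    unfolding coupling_column(1)[OF Uj Pk]
    by (intro integral_mono integrable_objective_weight[OF Uj] coupling_column(2)[OF Uj Pk])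
qed

lemma mclp_obj_eq_coupling:
  assumes U: "mclp_feasible A \<beta> b T U" and P: "mclp_dual_feasible A \<gamma> c T P" and T: "0 \<le> T"
    and tight: "\<And>j. AE t in ls_measure T (\<lambda>t. U t $ j).
          t \<in> {0..T} \<longrightarrow> (transpose A *v P (T - t)) $ j = \<gamma> $ j + (T - t) * c $ j"
  shows "mclp_obj \<gamma> c T U = coupling A T U P"
  unfolding mclp_obj_def coupling_def ls_integral_def
proof (rule sum.cong[OF refl])
  fix j
  note Uj = feasible_component_distribution[OF U T, of j]
  note Pk = dual_feasible_component_distribution[OF P T]
  have "AE t in ls_measure T (\<lambda>t. U t $ j). indicator {0..T} t * (\<gamma> $ j + (T - t) * c $ j) =
      indicator {0..T} t * (transpose A *v P (T - t)) $ j"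
    using tight[of j] by eventually_elim (auto simp: indicator_def)
  then show "integral\<^sup>L (ls_measure T (\<lambda>t. U t $ j)) (\<lambda>t. indicator {0..T} t * (\<gamma> $ j + (T - t) * c $ j))
      = (\<Sum>k\<in>UNIV. A $ k $ j * integral\<^sup>L (ls_measure T (\<lambda>t. U t $ j)) (\<lambda>t. indicator {0..T} t * P (T - t) $ k))"
    unfolding coupling_column(1)[OF Uj Pk]
    by (intro integral_cong_AE borel_measurable_integrable integrable_objective_weight[OF Uj]
        coupling_column(2)[OF Uj Pk])
qed

(* Exchanging the roles of U and P (and replacing A by -A^T) negates the coupling;
   this is the Fubini identity ls_integral_swap. *)
lemma coupling_antisym:
  assumes U: "mclp_feasible A \<beta> b T U" and P: "mclp_dual_feasible A \<gamma> c T P" and T: "0 \<le> T"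
  shows "coupling (- transpose A) T P U = - coupling A T U P"
proof -
  have swap: "integral\<^sup>L (ls_measure T (\<lambda>t. P t $ k)) (\<lambda>t. indicator {0..T} t * U (T - t) $ j)
      = integral\<^sup>L (ls_measure T (\<lambda>t. U t $ j)) (\<lambda>t. indicator {0..T} t * P (T - t) $ k)" for j k
    by (rule ls_integral_swap[OF dual_feasible_component_distribution[OF P T]
          feasible_component_distribution[OF U T]])
  show ?thesis unfolding coupling_def
    by (simp add: swap transpose_def sum_negf) (rule sum.swap)
qed

lemma mclp_obj_neg: "mclp_obj (- \<beta>) (- b) T P = - mclp_dual_obj \<beta> b T P"
proof -
  have "(\<lambda>t. indicator {0..T} t * ((- \<beta>) $ k + (T - t) * (- b) $ k)) =
        (\<lambda>t. - (indicator {0..T} t * (\<beta> $ k + (T - t) * b $ k)))" for k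
    by (auto simp: fun_eq_iff algebra_simps)
  then show ?thesis
    unfolding mclp_obj_def mclp_dual_obj_def ls_integral_def by (simp add: sum_negf)
qed

(* Weak duality: apply mclp_obj_le_coupling to U and to P (as a primal solution for -A^T). *)
theorem weak_duality:
  assumes U: "mclp_feasible A \<beta> b T U" and P: "mclp_dual_feasible A \<gamma> c T P" and T: "0 \<le> T"
  shows "mclp_obj \<gamma> c T U \<le> mclp_dual_obj \<beta> b T P"
proof -
  have P': "mclp_feasible (- transpose A) (- \<gamma>) (- c) T P" using P by (simp add: mclp_dual_feasible_iff)
  have U': "mclp_dual_feasible (- transpose A) (- \<beta>) (- b) T U" using U by (simp add: mclp_feasible_iff_dual)
  have "- mclp_dual_obj \<beta> b T P \<le> - coupling A T U P"
    using mclp_obj_le_coupling[OF P' U' T] by (simp add: mclp_obj_neg coupling_antisym[OF U P T])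
  then show ?thesis using mclp_obj_le_coupling[OF U P T] by linarith
qed

theorem optimal_if_complementary:
  assumes U: "mclp_feasible A \<beta> b T U" and P: "mclp_dual_feasible A \<gamma> c T P" and T: "0 \<le> T"
    and tight_U: "\<And>j. AE t in ls_measure T (\<lambda>t. U t $ j).
          t \<in> {0..T} \<longrightarrow> (transpose A *v P (T - t)) $ j = \<gamma> $ j + (T - t) * c $ j"
    and tight_P: "\<And>k. AE s in ls_measure T (\<lambda>s. P s $ k).
          s \<in> {0..T} \<longrightarrow> (A *v U (T - s)) $ k = \<beta> $ k + (T - s) * b $ k"
  shows "mclp_optimal A \<beta> b \<gamma> c T U \<and> mclp_dual_optimal A \<beta> b \<gamma> c T P"
proof -
  have P': "mclp_feasible (- transpose A) (- \<gamma>) (- c) T P" using P by (simp add: mclp_dual_feasible_iff)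
  have U': "mclp_dual_feasible (- transpose A) (- \<beta>) (- b) T U" using U by (simp add: mclp_feasible_iff_dual)
  have "AE s in ls_measure T (\<lambda>s. P s $ k). s \<in> {0..T} \<longrightarrow>
      (transpose (- transpose A) *v U (T - s)) $ k = (- \<beta>) $ k + (T - s) * (- b) $ k" for k
    using tight_P[of k] by eventually_elim (simp add: transpose_neg neg_matrix_vector_mult)
  then have "- mclp_dual_obj \<beta> b T P = - coupling A T U P"
    using mclp_obj_eq_coupling[OF P' U' T] by (simp add: mclp_obj_neg coupling_antisym[OF U P T])
  then have equal: "mclp_obj \<gamma> c T U = mclp_dual_obj \<beta> b T P"
    using mclp_obj_eq_coupling[OF U P T tight_U] by simp
  show ?thesis
    unfolding mclp_optimal_def mclp_dual_optimal_def
    using U P weak_duality[OF _ P T, of \<beta> b] weak_duality[OF U _ T, of \<gamma> c] equal by auto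
qed

section \<open>Piecewise constant rates and their integrals\<close>

lemma brk_0 [simp]: "brk \<tau> 0 = 0"
  by (simp add: brk_def)

lemma brk_prev: "1 \<le> n \<Longrightarrow> brk \<tau> n = brk \<tau> (n - 1) + \<tau> n"
  by (cases n) (auto simp: brk_def)

lemma brk_mono:
  assumes "\<forall>n\<in>{1..N}. 0 \<le> \<tau> n" "i \<le> j" "j \<le> N" shows "brk \<tau> i \<le> brk \<tau> j"
  unfolding brk_def using assms by (intro sum_mono2) auto

lemma brk_nonneg: assumes "\<forall>n\<in>{1..N}. 0 \<le> \<tau> n" "i \<le> N" shows "0 \<le> brk \<tau> i"
  using brk_mono[OF assms(1) _ assms(2), of 0] by simp

lemma breakpoint_interval:
  assumes tau: "\<forall>n\<in>{1..N}. 0 \<le> \<tau> n" and N: "1 \<le> N" and t: "0 \<le> t" "t \<le> brk \<tau> N"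
  obtains m where "m \<in> {1..N}" "brk \<tau> (m - 1) \<le> t" "t \<le> brk \<tau> m"
proof -
  define m where "m = (LEAST n. t \<le> brk \<tau> n)"
  have tm: "t \<le> brk \<tau> m" unfolding m_def by (rule LeastI[of _ N]) (rule t(2))
  have mN: "m \<le> N" unfolding m_def by (rule Least_le) (rule t(2))
  show ?thesis
  proof (cases "m = 0")
    case True
    then have "t = 0" using tm t by simp
    moreover have "0 \<le> brk \<tau> 1" using brk_nonneg[OF tau, of 1] N by simp
    ultimately show ?thesis using N by (intro that[of 1]) auto
  next
    case False
    then have "\<not> t \<le> brk \<tau> (m - 1)" unfolding m_def
      by (intro not_less_Least) (use False in \<open>auto simp: m_def\<close>)
    then show ?thesis using False mN tm by (intro that[of m]) auto
  qed
qed

(* ramp tau n t is the length of (t_{n-1}, t_n) intersected with [0,t], and cumulative N tau r t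
   is the integral over [0,t] of the piecewise constant rate equal to r n on (t_{n-1}, t_n). *)
definition ramp :: "(nat \<Rightarrow> real) \<Rightarrow> nat \<Rightarrow> real \<Rightarrow> real" where
  "ramp \<tau> n t = max 0 (min (brk \<tau> n) t - brk \<tau> (n - 1))"

definition cumulative :: "nat \<Rightarrow> (nat \<Rightarrow> real) \<Rightarrow> (nat \<Rightarrow> 'a::real_normed_vector) \<Rightarrow> real \<Rightarrow> 'a" where
  "cumulative N \<tau> r t = (\<Sum>n\<in>{1..N}. ramp \<tau> n t *\<^sub>R r n)"

lemma has_integral_indicator_Ioo:
  fixes a b t :: real
  assumes "0 \<le> a" "a \<le> b" "0 \<le> t"
  shows "(indicator {a<..<b} has_integral max 0 (min b t - a)) {0..t}"
proof -
  let ?J = "{a<..<b} \<inter> {0..t}"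
  have "?J \<in> lmeasurable \<and> max 0 (min b t - a) = measure lebesgue ?J"
  proof (cases "t \<le> a")
    case True
    then have "?J = {}" by auto
    then show ?thesis using True by simp
  next
    case False
    show ?thesis
    proof (cases "t < b")
      case True
      have "{a<..t} \<in> lmeasurable" using False by (auto simp: fmeasurable_def)
      moreover have "?J = {a<..t}" using False True assms by auto
      ultimately show ?thesis using True False by simp
    next
      case False2: False
      then have "?J = {a<..<b}" using False assms by auto
      then show ?thesis using False2 False assms by simp
    qed
  qed
  then have "(indicator ?J has_integral max 0 (min b t - a)) UNIV"
    using lmeasurable_iff_indicator_has_integral by blast
  moreover have "indicator ?J = (\<lambda>x. if x \<in> {0..t} then indicator {a<..<b} x else (0::real))"
    by (auto simp: indicator_def fun_eq_iff)
  ultimately show ?thesis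
    using has_integral_restrict_UNIV[of "{0..t}" "indicator {a<..<b}" "max 0 (min b t - a)"] by simp
qed

lemma rate_u_integral:
  assumes tau: "\<forall>n\<in>{1..N}. 0 \<le> \<tau> n" and t: "0 \<le> t"
  shows "integral {0..t} (rate_u N \<tau> r) = cumulative N \<tau> r t"
proof -
  have "(rate_u N \<tau> r has_integral cumulative N \<tau> r t) {0..t}"
    unfolding rate_u_def cumulative_def
  proof (rule has_integral_sum)
    fix n assume n: "n \<in> {1..N}"
    have "(indicator {brk \<tau> (n - 1)<..<brk \<tau> n} has_integral ramp \<tau> n t) {0..t}"
      unfolding ramp_def using n t brk_nonneg[OF tau, of "n - 1"] brk_mono[OF tau, of "n - 1" n]
      by (intro has_integral_indicator_Ioo) auto
    then show "((\<lambda>x. indicator {brk \<tau> (n - 1)<..<brk \<tau> n} x *\<^sub>R r n) has_integral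
        ramp \<tau> n t *\<^sub>R r n) {0..t}"
      by (rule has_integral_scaleR_left)
  qed simp
  then show ?thesis by (rule integral_unique)
qed

lemma cumulative_piece:
  assumes tau: "\<forall>n\<in>{1..N}. 0 \<le> \<tau> n" and m: "m \<in> {1..N}"
    and t: "brk \<tau> (m - 1) \<le> t" "t \<le> brk \<tau> m"
  shows "cumulative N \<tau> r t = (\<Sum>n\<in>{1..<m}. \<tau> n *\<^sub>R r n) + (t - brk \<tau> (m - 1)) *\<^sub>R r m"
proof -
  have before: "ramp \<tau> n t = \<tau> n" if n: "n \<in> {1..<m}" for n
  proof -
    have "0 \<le> \<tau> n" using n m tau by auto
    moreover have "brk \<tau> n \<le> brk \<tau> (m - 1)" using n m by (intro brk_mono[OF tau]) auto
    ultimately show ?thesis using brk_prev[of n \<tau>] n t unfolding ramp_def by auto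
  qed
  have after: "ramp \<tau> n t = 0" if n: "n \<in> {m<..N}" for n
  proof -
    have "brk \<tau> m \<le> brk \<tau> (n - 1)" using n by (intro brk_mono[OF tau]) auto
    then show ?thesis using t unfolding ramp_def by auto
  qed
  have current: "ramp \<tau> m t = t - brk \<tau> (m - 1)" using t unfolding ramp_def by auto
  let ?f = "\<lambda>n. ramp \<tau> n t *\<^sub>R r n"
  have split: "{1..N} = {1..<m} \<union> ({m} \<union> {m<..N})" using m by auto
  have "cumulative N \<tau> r t = sum ?f {1..<m} + sum ?f ({m} \<union> {m<..N})"
    unfolding cumulative_def split by (rule sum.union_disjoint) auto
  also have "sum ?f ({m} \<union> {m<..N}) = ?f m + sum ?f {m<..N}"
    by (subst sum.union_disjoint) auto
  finally have "cumulative N \<tau> r t = sum ?f {1..<m} + ?f m + sum ?f {m<..N}" by simp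
  then show ?thesis by (simp add: before after current)
qed

lemma brk_as_sum: "1 \<le> m \<Longrightarrow> brk \<tau> (m - 1) = (\<Sum>n\<in>{1..<m}. \<tau> n)"
  by (cases m) (auto simp: brk_def atLeastLessThanSuc_atLeastAtMost)

lemma cumulative_const:
  assumes tau: "\<forall>n\<in>{1..N}. 0 \<le> \<tau> n" and N: "1 \<le> N" and t: "0 \<le> t" "t \<le> brk \<tau> N"
  shows "cumulative N \<tau> (\<lambda>_. v) t = t *\<^sub>R v"
proof -
  obtain m where m: "m \<in> {1..N}" "brk \<tau> (m - 1) \<le> t" "t \<le> brk \<tau> m"
    using breakpoint_interval[OF tau N t] .
  have "cumulative N \<tau> (\<lambda>_. v) t = (\<Sum>n\<in>{1..<m}. \<tau> n) *\<^sub>R v + (t - brk \<tau> (m - 1)) *\<^sub>R v"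
    by (simp add: cumulative_piece[OF tau m] scaleR_sum_left)
  also have "(\<Sum>n\<in>{1..<m}. \<tau> n) = brk \<tau> (m - 1)" using m brk_as_sum[of m \<tau>] by simp
  finally show ?thesis by (simp add: algebra_simps)
qed

lemma cumulative_diff: "cumulative N \<tau> (\<lambda>n. f n - g n) t = cumulative N \<tau> f t - cumulative N \<tau> g t"
  by (simp add: cumulative_def scaleR_diff_right sum_subtractf)

lemma matrix_vector_cumulative:
  "M *v cumulative N \<tau> r t = cumulative N \<tau> (\<lambda>n. M *v r n) t" for M :: "real^'a^'b"
  unfolding cumulative_def by (simp add: vec.sum matrix_vector_mult_scaleR)

lemma cumulative_0:
  assumes tau: "\<forall>n\<in>{1..N}. 0 \<le> \<tau> n" shows "cumulative N \<tau> r 0 = 0"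
  unfolding cumulative_def ramp_def using brk_nonneg[OF tau] by (intro sum.neutral) auto

lemma cumulative_end:
  assumes tau: "\<forall>n\<in>{1..N}. 0 \<le> \<tau> n"
  shows "cumulative N \<tau> r (brk \<tau> N) = (\<Sum>n\<in>{1..N}. \<tau> n *\<^sub>R r n)"
  unfolding cumulative_def
proof (rule sum.cong[OF refl])
  fix n assume n: "n \<in> {1..N}"
  have "0 \<le> \<tau> n" "brk \<tau> n \<le> brk \<tau> N" using n tau brk_mono[OF tau, of n N] by auto
  then have "ramp \<tau> n (brk \<tau> N) = \<tau> n" using brk_prev[of n \<tau>] n unfolding ramp_def by auto
  then show "ramp \<tau> n (brk \<tau> N) *\<^sub>R r n = \<tau> n *\<^sub>R r n" by simp
qed

lemma continuous_cumulative: "continuous_on S (cumulative N \<tau> r)"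
  unfolding cumulative_def ramp_def by (intro continuous_intros)

lemma cumulative_mono:
  fixes r :: "nat \<Rightarrow> 'a::{ordered_real_vector, real_normed_vector}"
  assumes "\<forall>n\<in>{1..N}. 0 \<le> r n" "s \<le> t"
  shows "cumulative N \<tau> r s \<le> cumulative N \<tau> r t"
  unfolding cumulative_def ramp_def using assms by (intro sum_mono scaleR_right_mono) auto

lemma cumulative_nonneg:
  fixes r :: "nat \<Rightarrow> 'a::{ordered_real_vector, real_normed_vector}"
  assumes "\<forall>n\<in>{1..N}. 0 \<le> r n" shows "0 \<le> cumulative N \<tau> r t"
  unfolding cumulative_def ramp_def using assms by (intro sum_nonneg scaleR_nonneg_nonneg) auto

section \<open>The construction from a rate sequence\<close>

lemma state_x_prev: "1 \<le> m \<Longrightarrow> state_x x0 xd \<tau> m = state_x x0 xd \<tau> (m - 1) + \<tau> m *\<^sub>R xd m"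
  by (cases m) (auto simp: state_x_def)

lemma state_x_as_sum: "1 \<le> m \<Longrightarrow> state_x x0 xd \<tau> (m - 1) = x0 + (\<Sum>n\<in>{1..<m}. \<tau> n *\<^sub>R xd n)"
  by (cases m) (auto simp: state_x_def atLeastLessThanSuc_atLeastAtMost)

lemma segment_nonneg:
  fixes a d :: "real^'n"
  assumes "0 \<le> a" "0 \<le> a + \<sigma> *\<^sub>R d" "0 \<le> s" "s \<le> \<sigma>"
  shows "0 \<le> a + s *\<^sub>R d"
  unfolding less_eq_vec_def
proof
  fix i
  have "0 \<le> a $ i" "0 \<le> a $ i + \<sigma> * d $ i" using assms(1,2) by (auto simp: less_eq_vec_def)
  moreover have "min 0 (\<sigma> * d $ i) \<le> s * d $ i"
  proof (cases "0 \<le> d $ i")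
    case False
    then have "\<sigma> * d $ i \<le> s * d $ i" using assms(4) by (intro mult_right_mono_neg) auto
    then show ?thesis by simp
  next
    case True
    then have "0 \<le> s * d $ i" using assms(3) by simp
    then show ?thesis by simp
  qed
  ultimately show "0 $ i \<le> (a + s *\<^sub>R d) $ i" by auto
qed

lemma ls_null_set:
  assumes "ls_distribution T f" "measure (ls_measure T f) A = 0" "A \<in> sets borel"
  shows "A \<in> null_sets (ls_measure T f)"
proof -
  interpret finite_borel_measure "ls_measure T f" by (rule ls_measure_finite_borel(1)[OF assms(1)])
  show ?thesis using assms(2,3) by (simp add: null_sets_def emeasure_eq_measure)
qed

(* The primal half of a base-sequence solution, stated for an arbitrary matrix M so that it
   applies to the primal (M = A) and, after time reversal, to the dual (M = -A^T): rates
   M u^n + xdot^n = b with u^n >= 0, boundary jumps M u0 + x0 = beta and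
   M uN + xN = x^N, and nonnegative states at the breakpoints.  U is the constructed
   control and slack t = beta + t b - M U(t) the state trajectory. *)
locale piecewise_solution =
  fixes M :: "real^'a^'b" and \<beta> b :: "real^'b" and T :: real and N :: nat and \<tau> :: "nat \<Rightarrow> real"
    and ur :: "nat \<Rightarrow> real^'a" and xd :: "nat \<Rightarrow> real^'b"
    and uB0 uBN :: "real^'a" and x0 xBN :: "real^'b"
  assumes T_pos: "0 < T" and N_pos: "1 \<le> N" and tau_nonneg: "\<forall>n\<in>{1..N}. 0 \<le> \<tau> n"
    and tau_sum: "(\<Sum>n\<in>{1..N}. \<tau> n) = T"
    and rates: "\<forall>n\<in>{1..N}. M *v ur n + xd n = b" and rates_nonneg: "\<forall>n\<in>{1..N}. 0 \<le> ur n"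
    and initial: "M *v uB0 + x0 = \<beta>" and final: "M *v uBN + xBN = state_x x0 xd \<tau> N"
    and jumps_nonneg: "0 \<le> uB0" "0 \<le> uBN" and final_slack_nonneg: "0 \<le> xBN"
    and states_nonneg: "\<forall>n\<in>{0..N}. 0 \<le> state_x x0 xd \<tau> n"
begin

abbreviation U :: "real \<Rightarrow> real^'a" where
  "U \<equiv> constr_U T N \<tau> ur uB0 uBN"

abbreviation slack :: "real \<Rightarrow> real^'b" where
  "slack t \<equiv> \<beta> + t *\<^sub>R b - M *v U t"

lemma brk_N: "brk \<tau> N = T"
  using tau_sum by (simp add: brk_def)

lemma U_before_T: "0 \<le> t \<Longrightarrow> t < T \<Longrightarrow> U t = uB0 + cumulative N \<tau> ur t"
  by (simp add: constr_U_def rate_u_integral[OF tau_nonneg])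

lemma U_at_T: "U T = uB0 + cumulative N \<tau> ur T + uBN"
  using T_pos by (simp add: constr_U_def rate_u_integral[OF tau_nonneg])

lemma U_0: "U 0 = uB0"
  using U_before_T[of 0] T_pos cumulative_0[OF tau_nonneg] by simp

lemma M_cumulative_rates:
  assumes "0 \<le> t" "t \<le> T"
  shows "M *v cumulative N \<tau> ur t = t *\<^sub>R b - cumulative N \<tau> xd t"
proof -
  have "cumulative N \<tau> (\<lambda>n. M *v ur n) t = cumulative N \<tau> (\<lambda>n. b - xd n) t"
    unfolding cumulative_def using rates by (intro sum.cong refl) (simp add: eq_diff_eq)
  then show ?thesis
    using assms cumulative_const[OF tau_nonneg N_pos, of t b]
    by (simp add: matrix_vector_cumulative cumulative_diff brk_N)
qed

lemma slack_before_T: "0 \<le> t \<Longrightarrow> t < T \<Longrightarrow> slack t = x0 + cumulative N \<tau> xd t"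
  using U_before_T M_cumulative_rates[of t] initial
  by (auto simp: matrix_vector_right_distrib algebra_simps)

lemma slack_0: "slack 0 = x0"
  using slack_before_T[of 0] T_pos cumulative_0[OF tau_nonneg] by simp

lemma slack_at_T: "slack T = xBN"
proof -
  have uB0: "M *v uB0 = \<beta> - x0" using initial by (simp add: eq_diff_eq)
  have rates_T: "M *v cumulative N \<tau> ur T = T *\<^sub>R b - cumulative N \<tau> xd T"
    using M_cumulative_rates[of T] T_pos by simp
  have "state_x x0 xd \<tau> N = x0 + cumulative N \<tau> xd T"
    using cumulative_end[OF tau_nonneg, of xd] brk_N by (simp add: state_x_def)
  then have uBN: "M *v uBN = x0 + cumulative N \<tau> xd T - xBN" using final by (simp add: eq_diff_eq)
  have "M *v U T = M *v uB0 + M *v cumulative N \<tau> ur T + M *v uBN"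
    unfolding U_at_T by (simp add: matrix_vector_right_distrib)
  then show ?thesis unfolding uB0 rates_T uBN by (simp add: algebra_simps)
qed

lemma slack_piece:
  assumes m: "m \<in> {1..N}" and t: "brk \<tau> (m - 1) \<le> t" "t \<le> brk \<tau> m" "t < T"
  shows "slack t = state_x x0 xd \<tau> (m - 1) + (t - brk \<tau> (m - 1)) *\<^sub>R xd m"
proof -
  have "0 \<le> brk \<tau> (m - 1)" using m by (intro brk_nonneg[OF tau_nonneg]) auto
  then have "0 \<le> t" using t by linarith
  then have "slack t = x0 + cumulative N \<tau> xd t" using t by (intro slack_before_T)
  also have "\<dots> = (x0 + (\<Sum>n\<in>{1..<m}. \<tau> n *\<^sub>R xd n)) + (t - brk \<tau> (m - 1)) *\<^sub>R xd m"
    unfolding cumulative_piece[OF tau_nonneg m t(1,2)] by (simp add: add.assoc)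
  also have "x0 + (\<Sum>n\<in>{1..<m}. \<tau> n *\<^sub>R xd n) = state_x x0 xd \<tau> (m - 1)"
    using state_x_as_sum[of m x0 xd \<tau>] m by simp
  finally show ?thesis .
qed

(* The state stays nonnegative: it interpolates the nonnegative breakpoint states. *)
lemma slack_nonneg:
  assumes t: "0 \<le> t" "t \<le> T" shows "0 \<le> slack t"
proof (cases "t = T")
  case True then show ?thesis using slack_at_T final_slack_nonneg by simp
next
  case False
  then have "t < T" using t by simp
  obtain m where m: "m \<in> {1..N}" "brk \<tau> (m - 1) \<le> t" "t \<le> brk \<tau> m"
    using breakpoint_interval[OF tau_nonneg N_pos t(1)] t brk_N by auto
  have "0 \<le> state_x x0 xd \<tau> m" "0 \<le> state_x x0 xd \<tau> (m - 1)" using states_nonneg m by auto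
  then have "0 \<le> state_x x0 xd \<tau> (m - 1)" "0 \<le> state_x x0 xd \<tau> (m - 1) + \<tau> m *\<^sub>R xd m"
    using state_x_prev[of m x0 xd \<tau>] m by auto
  moreover have "0 \<le> t - brk \<tau> (m - 1)" "t - brk \<tau> (m - 1) \<le> \<tau> m"
    using m brk_prev[of m \<tau>] by auto
  ultimately show ?thesis
    unfolding slack_piece[OF m \<open>t < T\<close>] by (rule segment_nonneg)
qed

lemma U_nonneg: "0 \<le> t \<Longrightarrow> t \<le> T \<Longrightarrow> 0 \<le> U t"
  using U_before_T U_at_T cumulative_nonneg[OF rates_nonneg] jumps_nonneg
  by (cases "t = T") (auto intro: add_nonneg_nonneg)

lemma U_mono:
  assumes "0 \<le> s" "s \<le> t" "t \<le> T" shows "U s \<le> U t"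
proof (cases "t = T")
  case True
  show ?thesis
  proof (cases "s = T")
    case False
    then have "U s = uB0 + cumulative N \<tau> ur s" using assms U_before_T by simp
    also have "\<dots> \<le> uB0 + cumulative N \<tau> ur T" using cumulative_mono[OF rates_nonneg] assms by simp
    also have "\<dots> \<le> U T" unfolding U_at_T using jumps_nonneg by simp
    finally show ?thesis using True by simp
  qed (use True in simp)
next
  case False
  then show ?thesis using assms U_before_T cumulative_mono[OF rates_nonneg, of s t] by simp
qed

lemma U_right_continuous:
  assumes t: "0 \<le> t" "t < T" shows "continuous (at_right t) U"
proof -
  have "continuous (at t) (\<lambda>s. uB0 + cumulative N \<tau> ur s)"
    using continuous_cumulative[of UNIV N \<tau> ur]
    by (intro continuous_intros) (simp add: continuous_on_eq_continuous_at)
  then have "((\<lambda>s. uB0 + cumulative N \<tau> ur s) \<longlongrightarrow> U t) (at_right t)"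
    using U_before_T[OF t] by (simp add: continuous_at filterlim_at_split)
  moreover have "\<forall>\<^sub>F s in at_right t. uB0 + cumulative N \<tau> ur s = U s"
    using eventually_at_right_real[OF t(2)] by eventually_elim (use t U_before_T in auto)
  ultimately show ?thesis unfolding continuous_within by (rule Lim_transform_eventually)
qed

theorem U_feasible: "mclp_feasible M \<beta> b T U"
  unfolding mclp_feasible_def
  using U_nonneg U_mono U_right_continuous slack_nonneg by (auto simp: le_diff_eq)

lemma U_component_distribution: "ls_distribution T (\<lambda>t. U t $ j)"
  using feasible_component_distribution[OF U_feasible] T_pos by simp

lemma U_component_continuous:
  assumes c: "0 < c" "c \<le> T" and no_jump: "c = T \<Longrightarrow> uBN $ j = 0"
  shows "continuous_on {0..c} (\<lambda>t. U t $ j)"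
proof (rule continuous_on_eq)
  show "continuous_on {0..c} (\<lambda>t. uB0 $ j + cumulative N \<tau> ur t $ j)"
    by (intro continuous_intros continuous_cumulative)
  fix t assume "t \<in> {0..c}"
  then show "uB0 $ j + cumulative N \<tau> ur t $ j = U t $ j"
    using U_before_T[of t] U_at_T c no_jump by (cases "t = T") auto
qed

lemma U_component_idle:
  assumes n: "n \<in> {1..N}" and idle: "ur n $ j = 0" and x: "brk \<tau> (n - 1) \<le> x" "x < brk \<tau> n"
  shows "ls_ext T (\<lambda>t. U t $ j) x = uB0 $ j + (\<Sum>i\<in>{1..<n}. \<tau> i *\<^sub>R ur i) $ j"
proof -
  have "0 \<le> brk \<tau> (n - 1)" using n by (intro brk_nonneg[OF tau_nonneg]) auto
  moreover have "brk \<tau> n \<le> T" using n brk_mono[OF tau_nonneg, of n N] brk_N by auto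
  ultimately have "0 \<le> x" "x < T" using x by linarith+
  then show ?thesis
    using U_before_T[of x] cumulative_piece[OF tau_nonneg n x(1) less_imp_le[OF x(2)], where r = ur] idle
    by (simp add: ls_ext_def)
qed

(* The exceptional set is covered by
   atoms without mass, the finitely many breakpoints, and intervals where U_j is flat. *)
lemma AE_complementary:
  assumes at_0: "uB0 $ j \<noteq> 0 \<Longrightarrow> h 0 = 0" and at_T: "uBN $ j \<noteq> 0 \<Longrightarrow> h T = 0"
    and inside: "\<And>n t. n \<in> {1..N} \<Longrightarrow> ur n $ j \<noteq> 0 \<Longrightarrow> brk \<tau> (n - 1) < t \<Longrightarrow> t < brk \<tau> n \<Longrightarrow> h t = 0"
  shows "AE t in ls_measure T (\<lambda>t. U t $ j). t \<in> {0..T} \<longrightarrow> h t = 0"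
proof -
  let ?f = "\<lambda>t. U t $ j"
  let ?\<mu> = "ls_measure T ?f"
  note f = U_component_distribution[of j]
  define Z0 where "Z0 = {t :: real. t = 0 \<and> uB0 $ j = 0}"
  define ZT where "ZT = {t. t = T \<and> uBN $ j = 0}"
  define Zb where "Zb = (\<Union>n\<in>{n. n \<le> N \<and> 0 < brk \<tau> n \<and> brk \<tau> n < T}. {brk \<tau> n})"
  define Zi where "Zi = (\<Union>n\<in>{n. n \<in> {1..N} \<and> ur n $ j = 0}. {brk \<tau> (n - 1)<..<brk \<tau> n})"
  have "Z0 \<in> null_sets ?\<mu>"
  proof (cases "uB0 $ j = 0")
    case True
    then have "measure ?\<mu> {0..0} = 0" using measure_ls_Icc[OF f, of 0] U_0 T_pos by (simp add: ls_ext_def)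
    then show ?thesis using True by (simp add: Z0_def ls_null_set[OF f])
  qed (simp add: Z0_def)
  moreover have "ZT \<in> null_sets ?\<mu>"
  proof (cases "uBN $ j = 0")
    case True
    then have "measure ?\<mu> {T} = 0"
      using T_pos by (intro measure_ls_singleton[OF f] U_component_continuous) auto
    then show ?thesis using True by (simp add: ZT_def ls_null_set[OF f])
  qed (simp add: ZT_def)
  moreover have "Zb \<in> null_sets ?\<mu>" unfolding Zb_def
  proof (rule null_sets_UN')
    fix n assume n: "n \<in> {n. n \<le> N \<and> 0 < brk \<tau> n \<and> brk \<tau> n < T}"
    then have "measure ?\<mu> {brk \<tau> n} = 0"
      by (intro measure_ls_singleton[OF f] U_component_continuous) auto
    then show "{brk \<tau> n} \<in> null_sets ?\<mu>" by (simp add: ls_null_set[OF f])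
  qed simp
  moreover have "Zi \<in> null_sets ?\<mu>" unfolding Zi_def
  proof (rule null_sets_UN')
    fix n assume n: "n \<in> {n. n \<in> {1..N} \<and> ur n $ j = 0}"
    have "measure ?\<mu> {brk \<tau> (n - 1)<..<brk \<tau> n} = 0"
    proof (rule measure_ls_flat[OF f])
      fix x assume "brk \<tau> (n - 1) \<le> x" "x < brk \<tau> n"
      then show "ls_ext T ?f x = ls_ext T ?f (brk \<tau> (n - 1))"
        using U_component_idle[of n j x] U_component_idle[of n j "brk \<tau> (n - 1)"] n by simp
    qed
    then show "{brk \<tau> (n - 1)<..<brk \<tau> n} \<in> null_sets ?\<mu>" by (simp add: ls_null_set[OF f])
  qed simp
  ultimately have null: "Z0 \<union> ZT \<union> Zb \<union> Zi \<in> null_sets ?\<mu>" by auto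
  show ?thesis
  proof (rule AE_I'[OF null], rule subsetI)
    fix t assume "t \<in> {t \<in> space ?\<mu>. \<not> (t \<in> {0..T} \<longrightarrow> h t = 0)}"
    then have t: "0 \<le> t" "t \<le> T" "h t \<noteq> 0" by auto
    obtain m where m: "m \<in> {1..N}" "brk \<tau> (m - 1) \<le> t" "t \<le> brk \<tau> m"
      using breakpoint_interval[OF tau_nonneg N_pos t(1)] t brk_N by auto
    consider "t = 0" | "t = T" | "0 < t" "t < T" "t = brk \<tau> (m - 1) \<or> t = brk \<tau> m"
      | "brk \<tau> (m - 1) < t" "t < brk \<tau> m"
      using t m by fastforce
    then show "t \<in> Z0 \<union> ZT \<union> Zb \<union> Zi"
    proof cases
      case 3
      then have "t \<in> Zb" using m unfolding Zb_def by (auto intro: diff_le_self le_trans)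
      then show ?thesis by simp
    next
      case 4
      then have "t \<in> Zi" using inside[OF m(1) _ 4] t m unfolding Zi_def by auto
      then show ?thesis by simp
    qed (use t at_0 at_T in \<open>auto simp: Z0_def ZT_def\<close>)
  qed
qed

end

section \<open>Time reversal\<close>

definition reverse_seq :: "nat \<Rightarrow> (nat \<Rightarrow> 'a) \<Rightarrow> nat \<Rightarrow> 'a" where
  "reverse_seq N f n = f (N + 1 - n)"

lemma sum_reverse_seq:
  fixes g :: "nat \<Rightarrow> 'a::comm_monoid_add"
  assumes "m \<le> N"
  shows "(\<Sum>i\<in>{1..m}. reverse_seq N g i) = (\<Sum>n\<in>{N + 1 - m..N}. g n)"
  by (rule sum.reindex_bij_witness[where i = "\<lambda>n. N + 1 - n" and j = "\<lambda>n. N + 1 - n"])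
     (use assms in \<open>auto simp: reverse_seq_def\<close>)

lemma sum_reverse_seq_all: "(\<Sum>i\<in>{1..N}. reverse_seq N g i) = (\<Sum>n\<in>{1..N}. g n)"
  using sum_reverse_seq[of N N g] by simp

lemma brk_reverse:
  assumes "m \<le> N"
  shows "brk (reverse_seq N \<tau>) m = brk \<tau> N - brk \<tau> (N - m)"
proof -
  have "{1..N} = {1..N - m} \<union> {N + 1 - m..N}" using assms by auto
  then have "brk \<tau> N = brk \<tau> (N - m) + (\<Sum>n\<in>{N + 1 - m..N}. \<tau> n)"
    unfolding brk_def by (simp add: sum.union_disjoint)
  then show ?thesis unfolding brk_def sum_reverse_seq[OF assms] by simp
qed

lemma state_x_reverse:
  assumes "m \<le> N"
  shows "state_x qN (reverse_seq N qd) (reverse_seq N \<tau>) m = state_q N qN qd \<tau> (N - m)"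
proof -
  have "(\<Sum>i\<in>{1..m}. reverse_seq N \<tau> i *\<^sub>R reverse_seq N qd i) = (\<Sum>n\<in>{N + 1 - m..N}. \<tau> n *\<^sub>R qd n)"
    using sum_reverse_seq[OF assms, of "\<lambda>n. \<tau> n *\<^sub>R qd n"] by (simp add: reverse_seq_def)
  moreover have "N - m + 1 = N + 1 - m" using assms by simp
  ultimately show ?thesis unfolding state_x_def state_q_def by simp
qed

lemma brk_reverse_piece:
  assumes n: "n \<in> {1..N}" and T: "brk \<tau> N = T"
  shows "brk (reverse_seq N \<tau>) (N - n) = T - brk \<tau> n"
    and "brk (reverse_seq N \<tau>) (N + 1 - n) = T - brk \<tau> (n - 1)"
  using brk_reverse[of "N - n" N \<tau>] brk_reverse[of "N + 1 - n" N \<tau>] n T by auto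

lemma constr_P_reverse:
  assumes T: "brk \<tau> N = T"
  shows "constr_P T N \<tau> pr pB0 pBN = constr_U T N (reverse_seq N \<tau>) (reverse_seq N pr) pBN pB0"
proof -
  have rate: "rate_u N (reverse_seq N \<tau>) (reverse_seq N pr) = rate_p T N \<tau> pr"
  proof
    fix s
    have "rate_u N (reverse_seq N \<tau>) (reverse_seq N pr) s = (\<Sum>i\<in>{1..N}. reverse_seq N
        (\<lambda>n. indicator {T - brk \<tau> n<..<T - brk \<tau> (n - 1)} s *\<^sub>R pr n) i)"
      unfolding rate_u_def
    proof (rule sum.cong[OF refl])
      fix i assume i: "i \<in> {1..N}"
      then have "N + 1 - i \<in> {1..N}" "N - (N + 1 - i) = i - 1" "N + 1 - (N + 1 - i) = i" by auto
      then show "indicator {brk (reverse_seq N \<tau>) (i - 1)<..<brk (reverse_seq N \<tau>) i} s *\<^sub>R reverse_seq N pr i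
          = reverse_seq N (\<lambda>n. indicator {T - brk \<tau> n<..<T - brk \<tau> (n - 1)} s *\<^sub>R pr n) i"
        using brk_reverse_piece[of "N + 1 - i" N \<tau> T] T by (simp add: reverse_seq_def)
    qed
    also have "\<dots> = rate_p T N \<tau> pr s"
      unfolding rate_p_def by (rule sum_reverse_seq_all)
    finally show "rate_u N (reverse_seq N \<tau>) (reverse_seq N pr) s = rate_p T N \<tau> pr s" .
  qed
  show ?thesis unfolding constr_P_def constr_U_def rate ..
qed

(* A solution of the base-sequence system (a)-(e) with all boundary values, interval lengths
   and breakpoint states nonnegative. *)
locale base_sequence_solution =
  fixes A :: "real^'j^'k" and \<beta> b :: "real^'k" and \<gamma> c :: "real^'j" and T :: real
    and N :: nat and Ks :: "nat \<Rightarrow> 'k set" and Js :: "nat \<Rightarrow> 'j set"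
    and ur :: "nat \<Rightarrow> real^'j" and xd :: "nat \<Rightarrow> real^'k"
    and pr :: "nat \<Rightarrow> real^'k" and qd :: "nat \<Rightarrow> real^'j"
    and uB0 uBN qN qB0 :: "real^'j" and x0 xBN pB0 pBN :: "real^'k"
    and \<tau> :: "nat \<Rightarrow> real"
  assumes T_pos: "0 < T"
    and N_pos: "1 \<le> N"
    and primal_rates: "\<forall>n\<in>{1..N}. primal_basic_sol A b (Ks n) (Js n) (ur n) (xd n)"
    and dual_rates: "\<forall>n\<in>{1..N}. dual_basic_sol A c (Ks n) (Js n) (pr n) (qd n)"
    and admissible: "\<forall>n\<in>{1..N}. 0 \<le> ur n \<and> 0 \<le> pr n"
    and compat: "Ks 0 \<subseteq> Ks 1" "Js (N+1) \<subseteq> Js N"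
    and eq_a_x: "\<forall>n\<in>{1..<N}. \<forall>k. Inr k \<in> basic_vars (Ks n) (Js n) - basic_vars (Ks (n+1)) (Js (n+1))
                   \<longrightarrow> state_x x0 xd \<tau> n $ k = 0"
    and eq_a_q: "\<forall>n\<in>{1..<N}. \<forall>j. Inl j \<in> basic_vars (Ks n) (Js n) - basic_vars (Ks (n+1)) (Js (n+1))
                   \<longrightarrow> state_q N qN qd \<tau> n $ j = 0"
    and eq_b: "(\<Sum>n\<in>{1..N}. \<tau> n) = T"
    and eq_c: "\<forall>j\<in>Js 0. uB0 $ j = 0" "\<forall>k. k \<notin> Ks 0 \<longrightarrow> x0 $ k = 0"
              "\<forall>k\<in>Ks 0. pB0 $ k = 0" "\<forall>j. j \<notin> Js 0 \<longrightarrow> qB0 $ j = 0"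
              "\<forall>k\<in>Ks (N+1). pBN $ k = 0" "\<forall>j. j \<notin> Js (N+1) \<longrightarrow> qN $ j = 0"
              "\<forall>j\<in>Js (N+1). uBN $ j = 0" "\<forall>k. k \<notin> Ks (N+1) \<longrightarrow> xBN $ k = 0"
    and eq_d: "A *v uB0 + x0 = \<beta>" "transpose A *v pBN - qN = \<gamma>"
    and eq_e: "A *v uBN + xBN - state_x x0 xd \<tau> N = 0"
              "transpose A *v pB0 - qB0 + state_q N qN qd \<tau> 0 = 0"
    and nonneg_bd: "0 \<le> uB0" "0 \<le> uBN" "0 \<le> xBN" "0 \<le> pB0" "0 \<le> pBN" "0 \<le> qB0"
    and nonneg_tau: "\<forall>n\<in>{1..N}. 0 \<le> \<tau> n"
    and nonneg_states: "\<forall>n\<in>{0..N}. 0 \<le> state_x x0 xd \<tau> n \<and> 0 \<le> state_q N qN qd \<tau> n"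
begin

(* Combinatorial core: by (a), (c) and K_0 <= K_1, the state x^{n-1}_k vanishes whenever
   xdot_k is not basic in B_n (k notin K_n); symmetrically q^n_j = 0 for j notin J_n. *)
lemma primal_slack_zero:
  assumes n: "n \<in> {1..N}" and k: "k \<notin> Ks n"
  shows "state_x x0 xd \<tau> (n - 1) $ k = 0"
proof -
  have "1 \<le> n" "n \<le> N" using n by auto
  then have "\<forall>k. k \<notin> Ks n \<longrightarrow> state_x x0 xd \<tau> (n - 1) $ k = 0"
  proof (induction rule: dec_induct)
    case base show ?case using compat(1) eq_c(2) by (auto simp: state_x_def)
  next
    case (step m)
    show ?case
    proof (intro allI impI)
      fix k assume k: "k \<notin> Ks (Suc m)"
      have m: "m \<in> {1..<N}" using step by auto
      show "state_x x0 xd \<tau> (Suc m - 1) $ k = 0"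
      proof (cases "k \<in> Ks m")
        case True
        then have "Inr k \<in> basic_vars (Ks m) (Js m) - basic_vars (Ks (m+1)) (Js (m+1))"
          using k by (auto simp: basic_vars_def)
        then show ?thesis using eq_a_x m by auto
      next
        case False
        then have "state_x x0 xd \<tau> (m - 1) $ k = 0" using step by auto
        moreover have "xd m $ k = 0" using primal_rates False m by (auto simp: primal_basic_sol_def)
        ultimately show ?thesis using state_x_prev[of m x0 xd \<tau>] m by simp
      qed
    qed
  qed
  then show ?thesis using k by auto
qed

lemma dual_slack_zero:
  assumes n: "n \<in> {1..N}" and j: "j \<notin> Js n"
  shows "state_q N qN qd \<tau> n $ j = 0"
proof -
  have "n \<le> N" using n by auto
  then have "\<forall>j. j \<notin> Js n \<longrightarrow> state_q N qN qd \<tau> n $ j = 0"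
  proof (induction rule: inc_induct)
    case base show ?case using compat(2) eq_c(6) by (auto simp: state_q_def)
  next
    case (step m)
    show ?case
    proof (intro allI impI)
      fix j assume j: "j \<notin> Js m"
      have m: "m \<in> {1..<N}" using step n by auto
      show "state_q N qN qd \<tau> m $ j = 0"
      proof (cases "j \<in> Js (Suc m)")
        case True
        then have "Inl j \<in> basic_vars (Ks m) (Js m) - basic_vars (Ks (m+1)) (Js (m+1))"
          using j by (auto simp: basic_vars_def)
        then show ?thesis using eq_a_q m by auto
      next
        case False
        then have "state_q N qN qd \<tau> (Suc m) $ j = 0" using step.IH by auto
        moreover have "qd (Suc m) $ j = 0" using dual_rates False m by (auto simp: dual_basic_sol_def)
        moreover have "{m + 1..N} = insert (Suc m) {Suc m + 1..N}" using m by auto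
        ultimately show ?thesis by (simp add: state_q_def)
      qed
    qed
  qed
  then show ?thesis using j by auto
qed

sublocale primal: piecewise_solution A \<beta> b T N \<tau> ur xd uB0 uBN x0 xBN
proof
  show "\<forall>n\<in>{1..N}. A *v ur n + xd n = b" using primal_rates by (auto simp: primal_basic_sol_def)
  show "A *v uBN + xBN = state_x x0 xd \<tau> N" using eq_e(1) by (simp only: right_minus_eq)
  show "\<forall>n\<in>{1..N}. 0 \<le> ur n" using admissible by simp
  show "\<forall>n\<in>{0..N}. 0 \<le> state_x x0 xd \<tau> n" using nonneg_states by simp
qed (fact T_pos N_pos nonneg_tau eq_b eq_d(1) nonneg_bd)+

sublocale dual: piecewise_solution "- transpose A" "- \<gamma>" "- c" T N "reverse_seq N \<tau>"
    "reverse_seq N pr" "reverse_seq N qd" pBN pB0 qN qB0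
proof
  have reversed: "N + 1 - n \<in> {1..N}" if "n \<in> {1..N}" for n using that by auto
  show "\<forall>n\<in>{1..N}. 0 \<le> reverse_seq N \<tau> n" "\<forall>n\<in>{1..N}. 0 \<le> reverse_seq N pr n"
    using nonneg_tau admissible reversed by (auto simp: reverse_seq_def)
  show "(\<Sum>n\<in>{1..N}. reverse_seq N \<tau> n) = T" using eq_b sum_reverse_seq_all[of N \<tau>] by simp
  show "\<forall>n\<in>{1..N}. (- transpose A) *v reverse_seq N pr n + reverse_seq N qd n = - c"
  proof
    fix n assume "n \<in> {1..N}"
    then have "transpose A *v pr (N + 1 - n) - qd (N + 1 - n) = c"
      using dual_rates reversed by (auto simp: dual_basic_sol_def)
    then show "(- transpose A) *v reverse_seq N pr n + reverse_seq N qd n = - c"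
      unfolding reverse_seq_def neg_matrix_vector_mult by (simp add: algebra_simps)
  qed
  show "(- transpose A) *v pBN + qN = - \<gamma>"
    using eq_d(2) unfolding neg_matrix_vector_mult by (simp add: algebra_simps)
  have "state_q N qN qd \<tau> 0 = qB0 - transpose A *v pB0"
    using eq_e(2) by (simp add: algebra_simps eq_neg_iff_add_eq_0)
  then show "(- transpose A) *v pB0 + qB0 = state_x qN (reverse_seq N qd) (reverse_seq N \<tau>) N"
    unfolding state_x_reverse[OF order_refl] neg_matrix_vector_mult by simp
  show "\<forall>n\<in>{0..N}. 0 \<le> state_x qN (reverse_seq N qd) (reverse_seq N \<tau>) n"
    using nonneg_states state_x_reverse[of _ N qN qd \<tau>] by auto
qed (fact T_pos N_pos nonneg_bd)+

lemma P_as_reversed_U: "constr_P T N \<tau> pr pB0 pBN = dual.U"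
  by (rule constr_P_reverse[OF primal.brk_N])

lemma dual_slack_on_piece:
  assumes n: "n \<in> {1..N}" and t: "brk \<tau> (n - 1) < t" "t < brk \<tau> n"
  shows "dual.slack (T - t) = state_q N qN qd \<tau> n + (brk \<tau> n - t) *\<^sub>R qd n"
proof -
  define m where "m = N + 1 - n"
  have m: "m \<in> {1..N}" "m - 1 = N - n" "N - (m - 1) = n" using n by (auto simp: m_def)
  have brk_m: "brk (reverse_seq N \<tau>) (m - 1) = T - brk \<tau> n" "brk (reverse_seq N \<tau>) m = T - brk \<tau> (n - 1)"
    using brk_reverse_piece[OF n primal.brk_N] m by (auto simp: m_def)
  have "0 \<le> brk \<tau> (n - 1)" using n by (intro brk_nonneg[OF nonneg_tau]) auto
  then have "brk (reverse_seq N \<tau>) (m - 1) \<le> T - t" "T - t \<le> brk (reverse_seq N \<tau>) m" "T - t < T"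
    using t brk_m by auto
  then have "dual.slack (T - t) = state_x qN (reverse_seq N qd) (reverse_seq N \<tau>) (m - 1)
      + (T - t - brk (reverse_seq N \<tau>) (m - 1)) *\<^sub>R reverse_seq N qd m"
    by (rule dual.slack_piece[OF m(1)])
  also have "\<dots> = state_q N qN qd \<tau> n + (brk \<tau> n - t) *\<^sub>R qd n"
    using state_x_reverse[of "m - 1" N qN qd \<tau>] m brk_m by (simp add: reverse_seq_def m_def)
  finally show ?thesis .
qed

(* The dual constraints are tight dU_j-a.e.: where u^n_j > 0 the variable u_j is basic, so
   q^n_j = 0 and qdot^n_j = 0; the jumps at 0 and T are handled by (c). *)
lemma U_tight:
  "AE t in ls_measure T (\<lambda>t. primal.U t $ j).
     t \<in> {0..T} \<longrightarrow> (transpose A *v constr_P T N \<tau> pr pB0 pBN (T - t)) $ j = \<gamma> $ j + (T - t) * c $ j"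
proof -
  have "AE t in ls_measure T (\<lambda>t. primal.U t $ j). t \<in> {0..T} \<longrightarrow> dual.slack (T - t) $ j = 0"
  proof (rule primal.AE_complementary)
    assume "uB0 $ j \<noteq> 0"
    then show "dual.slack (T - 0) $ j = 0" using dual.slack_at_T eq_c(1,4) by auto
  next
    assume "uBN $ j \<noteq> 0"
    then show "dual.slack (T - T) $ j = 0" using dual.slack_0 eq_c(6,7) by auto
  next
    fix n t assume n: "n \<in> {1..N}" and active: "ur n $ j \<noteq> 0"
      and t: "brk \<tau> (n - 1) < t" "t < brk \<tau> n"
    have "j \<notin> Js n" using active primal_rates n by (auto simp: primal_basic_sol_def)
    then have "state_q N qN qd \<tau> n $ j = 0" "qd n $ j = 0"
      using dual_slack_zero[OF n] dual_rates n by (auto simp: dual_basic_sol_def)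
    then show "dual.slack (T - t) $ j = 0" unfolding dual_slack_on_piece[OF n t] by simp
  qed
  then show ?thesis
    unfolding P_as_reversed_U by eventually_elim (simp add: neg_matrix_vector_mult algebra_simps)
qed

lemma P_tight:
  "AE s in ls_measure T (\<lambda>s. constr_P T N \<tau> pr pB0 pBN s $ k).
     s \<in> {0..T} \<longrightarrow> (A *v primal.U (T - s)) $ k = \<beta> $ k + (T - s) * b $ k"
proof -
  have "AE s in ls_measure T (\<lambda>s. dual.U s $ k). s \<in> {0..T} \<longrightarrow> primal.slack (T - s) $ k = 0"
  proof (rule dual.AE_complementary)
    assume "pBN $ k \<noteq> 0"
    then show "primal.slack (T - 0) $ k = 0" using primal.slack_at_T eq_c(5,8) by auto
  next
    assume "pB0 $ k \<noteq> 0"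
    then show "primal.slack (T - T) $ k = 0" using primal.slack_0 eq_c(2,3) by auto
  next
    fix m s assume m: "m \<in> {1..N}" and active: "reverse_seq N pr m $ k \<noteq> 0"
      and s: "brk (reverse_seq N \<tau>) (m - 1) < s" "s < brk (reverse_seq N \<tau>) m"
    define n where "n = N + 1 - m"
    have n: "n \<in> {1..N}" "N - n = m - 1" "N + 1 - n = m" using m by (auto simp: n_def)
    have "brk \<tau> n \<le> T" using n brk_mono[OF nonneg_tau, of n N] primal.brk_N by auto
    then have t: "brk \<tau> (n - 1) \<le> T - s" "T - s \<le> brk \<tau> n" "T - s < T"
      using s brk_reverse_piece[OF n(1) primal.brk_N] n by auto
    have "pr n $ k \<noteq> 0" using active by (simp add: reverse_seq_def n_def)
    then have "k \<notin> Ks n" using dual_rates n by (auto simp: dual_basic_sol_def)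
    then have "state_x x0 xd \<tau> (n - 1) $ k = 0" "xd n $ k = 0"
      using primal_slack_zero[OF n(1)] primal_rates n by (auto simp: primal_basic_sol_def)
    then show "primal.slack (T - s) $ k = 0" unfolding primal.slack_piece[OF n(1) t] by simp
  qed
  then show ?thesis unfolding P_as_reversed_U by eventually_elim (simp add: algebra_simps)
qed

theorem optimal:
  "mclp_optimal A \<beta> b \<gamma> c T (constr_U T N \<tau> ur uB0 uBN) \<and>
   mclp_dual_optimal A \<beta> b \<gamma> c T (constr_P T N \<tau> pr pB0 pBN)"
proof (rule optimal_if_complementary[OF primal.U_feasible _ _ U_tight P_tight])
  show "mclp_dual_feasible A \<gamma> c T (constr_P T N \<tau> pr pB0 pBN)"
    unfolding mclp_dual_feasible_iff P_as_reversed_U by (rule dual.U_feasible)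
qed (use T_pos in simp)

end

(* The main theorem: the constructed functions are optimal for M-CLP and M-CLP*.  The data form
   a base_sequence_solution. *)
theorem mainTheorem1:
  fixes A :: "real^'j^'k" and \<beta> b :: "real^'k" and \<gamma> c :: "real^'j" and T :: real
    and N :: nat and Ks :: "nat \<Rightarrow> 'k set" and Js :: "nat \<Rightarrow> 'j set"
    and ur :: "nat \<Rightarrow> real^'j" and xd :: "nat \<Rightarrow> real^'k"
    and pr :: "nat \<Rightarrow> real^'k" and qd :: "nat \<Rightarrow> real^'j"
    and uB0 uBN qN qB0 :: "real^'j" and x0 xBN pB0 pBN :: "real^'k"
    and \<tau> :: "nat \<Rightarrow> real"
  assumes T_pos: "0 < T"
    and nondeg: "nondeg_I A b c"
    \<comment> \<open>base sequence\<close>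
    and N_pos: "1 \<le> N"
    and bases: "\<forall>n\<in>{1..N}. is_basis A (Ks n) (Js n)"
    and primal_rates: "\<forall>n\<in>{1..N}. primal_basic_sol A b (Ks n) (Js n) (ur n) (xd n)"
    and dual_rates: "\<forall>n\<in>{1..N}. dual_basic_sol A c (Ks n) (Js n) (pr n) (qd n)"
    and admissible: "\<forall>n\<in>{1..N}. 0 \<le> ur n \<and> 0 \<le> pr n"
    and adj: "\<forall>n\<in>{1..<N}. adjacent (Ks n) (Js n) (Ks (n+1)) (Js (n+1))"
    and compat: "Ks 0 \<subseteq> Ks 1" "Js (N+1) \<subseteq> Js N"
    \<comment> \<open>(a): leaving variable v_n\<close>
    and eq_a_x: "\<forall>n\<in>{1..<N}. \<forall>k. Inr k \<in> basic_vars (Ks n) (Js n) - basic_vars (Ks (n+1)) (Js (n+1))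
                   \<longrightarrow> state_x x0 xd \<tau> n $ k = 0"
    and eq_a_q: "\<forall>n\<in>{1..<N}. \<forall>j. Inl j \<in> basic_vars (Ks n) (Js n) - basic_vars (Ks (n+1)) (Js (n+1))
                   \<longrightarrow> state_q N qN qd \<tau> n $ j = 0"
    \<comment> \<open>(b)\<close>
    and eq_b: "(\<Sum>n\<in>{1..N}. \<tau> n) = T"
    \<comment> \<open>(c)\<close>
    and eq_c: "\<forall>j\<in>Js 0. uB0 $ j = 0" "\<forall>k. k \<notin> Ks 0 \<longrightarrow> x0 $ k = 0"
              "\<forall>k\<in>Ks 0. pB0 $ k = 0" "\<forall>j. j \<notin> Js 0 \<longrightarrow> qB0 $ j = 0"
              "\<forall>k\<in>Ks (N+1). pBN $ k = 0" "\<forall>j. j \<notin> Js (N+1) \<longrightarrow> qN $ j = 0"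
              "\<forall>j\<in>Js (N+1). uBN $ j = 0" "\<forall>k. k \<notin> Ks (N+1) \<longrightarrow> xBN $ k = 0"
    \<comment> \<open>(d)\<close>
    and eq_d: "A *v uB0 + x0 = \<beta>" "transpose A *v pBN - qN = \<gamma>"
    \<comment> \<open>(e)\<close>
    and eq_e: "A *v uBN + xBN - state_x x0 xd \<tau> N = 0"
              "transpose A *v pB0 - qB0 + state_q N qN qd \<tau> 0 = 0"
    \<comment> \<open>nonnegativity\<close>
    and nonneg_bd: "0 \<le> uB0" "0 \<le> uBN" "0 \<le> x0" "0 \<le> xBN"
                   "0 \<le> pB0" "0 \<le> pBN" "0 \<le> qN" "0 \<le> qB0"
    and nonneg_tau: "\<forall>n\<in>{1..N}. 0 \<le> \<tau> n"
    and nonneg_states: "\<forall>n\<in>{0..N}. 0 \<le> state_x x0 xd \<tau> n \<and> 0 \<le> state_q N qN qd \<tau> n"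
  shows "mclp_optimal A \<beta> b \<gamma> c T (constr_U T N \<tau> ur uB0 uBN) \<and>
         mclp_dual_optimal A \<beta> b \<gamma> c T (constr_P T N \<tau> pr pB0 pBN)"
proof -
  interpret base_sequence_solution A \<beta> b \<gamma> c T N Ks Js ur xd pr qd uB0 uBN qN qB0 x0 xBN pB0 pBN \<tau>
    by unfold_locales (fact assms)+
  show ?thesis by (rule optimal)
qed

end
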